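(* Let $X$ be a pure $d$-dimensional simplicial complex, $0\le k\le d-1$, let $\sigma\in X(k+i)$ with $i\ge1$, and let $c\subseteq\sigma$ with $|c|=k$. Then there exists exactly one face $r$ of $R_k(X)$ with $\bigcup r=\sigma$ and $\bigcap r=c$.
   Context: $X(j)$ = faces with $j+1$ elements. The representation complex $R_k(X)$ has vertex set $X(k)$ and, for $1\le i\le d-k$, $i$-faces the sets $S$ of $i+1$ distinct elements of $X(k)$ with $\bigcup S\in X(i+k)$ and $|\bigcap S|=k$ (plus the empty face). For a face $r$ of dimension $\ge1$, $\bigcap r$ is its core. *)

theory Defs
  imports Main
begin

definition simplicial_complex :: "'a set set \<Rightarrow> bool" where
  "simplicial_complex X \<longleftrightarrow> X \<noteq> {} \<and> (\<forall>F\<in>X. finite F) \<and> (\<forall>F\<in>X. \<forall>G. G \<subseteq> F \<longrightarrow> G \<in> X)"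

definition faces :: "'a set set \<Rightarrow> nat \<Rightarrow> 'a set set" where
  "faces X j = {F \<in> X. card F = j + 1}"

definition pure_complex :: "'a set set \<Rightarrow> nat \<Rightarrow> bool" where
  "pure_complex X d \<longleftrightarrow> simplicial_complex X \<and>
     (\<forall>F\<in>X. card F \<le> d + 1) \<and> (\<forall>F\<in>X. \<exists>G\<in>faces X d. F \<subseteq> G)"

definition rep_complex :: "'a set set \<Rightarrow> nat \<Rightarrow> nat \<Rightarrow> 'a set set set" where
  "rep_complex X d k =
     {{}} \<union> {{v} | v. v \<in> faces X k} \<union>
     {S. \<exists>i. 1 \<le> i \<and> i \<le> d - k \<and> S \<subseteq> faces X k \<and> finite S \<and> card S = i + 1 \<and>
            \<Union>S \<in> faces X (i + k) \<and> card (\<Inter>S) = k}"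

end

theory Submission
  imports Defs
begin

text \<open>The face with union \<open>\<sigma>\<close> and core \<open>c\<close> is forced to be the set of all \<open>k\<close>-faces
  \<open>c \<union> {x}\<close> with \<open>x \<in> \<sigma> - c\<close>: every vertex of a face of \<open>R\<^sub>k(X)\<close> is a \<open>(k+1)\<close>-set
  containing the core, hence the core plus one point of the union, and every point of the
  union must be covered. Conversely these \<open>|\<sigma> - c| = i + 1 \<ge> 2\<close> sets are faces of \<open>\<sigma>\<close>, their
  union is \<open>\<sigma>\<close> and, as there are at least two of them, their intersection is \<open>c\<close>.\<close>

definition one_point_extensions :: "'a set \<Rightarrow> 'a set \<Rightarrow> 'a set set" where
  "one_point_extensions c \<sigma> = (\<lambda>x. insert x c) ` (\<sigma> - c)"

lemma card_one_point_extensions: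
  assumes "finite \<sigma>"
  shows "card (one_point_extensions c \<sigma>) = card (\<sigma> - c)"
proof -
  have "inj_on (\<lambda>x. insert x c) (\<sigma> - c)"
    by (rule inj_onI) (metis Diff_iff insert_iff)
  then show ?thesis
    by (simp add: one_point_extensions_def card_image)
qed

lemma Union_one_point_extensions:
  assumes "c \<subset> \<sigma>"
  shows "\<Union>(one_point_extensions c \<sigma>) = \<sigma>"
  using assms unfolding one_point_extensions_def by blast

lemma Inter_one_point_extensions:
  assumes "2 \<le> card (\<sigma> - c)"
  shows "\<Inter>(one_point_extensions c \<sigma>) = c"
proof
  show "c \<subseteq> \<Inter>(one_point_extensions c \<sigma>)"
    unfolding one_point_extensions_def by blast
  show "\<Inter>(one_point_extensions c \<sigma>) \<subseteq> c"
  proof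
    fix z assume z: "z \<in> \<Inter>(one_point_extensions c \<sigma>)"
    show "z \<in> c"
    proof (rule ccontr)
      assume "z \<notin> c"
      with z have "\<sigma> - c \<subseteq> {z}"
        unfolding one_point_extensions_def by blast
      then have "card (\<sigma> - c) \<le> 1"
        using card_mono[of "{z}"] by fastforce
      with assms show False
        by simp
    qed
  qed
qed

lemma one_point_extensions_subset_faces:
  assumes "simplicial_complex X" "\<sigma> \<in> X" "c \<subseteq> \<sigma>" "finite c"
  shows "one_point_extensions c \<sigma> \<subseteq> faces X (card c)"
proof
  fix v assume "v \<in> one_point_extensions c \<sigma>"
  then obtain x where x: "x \<in> \<sigma>" "x \<notin> c" "v = insert x c"
    unfolding one_point_extensions_def by auto
  then have "v \<in> X"
    using assms unfolding simplicial_complex_def by blast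
  moreover have "card v = card c + 1"
    using x \<open>finite c\<close> by simp
  ultimately show "v \<in> faces X (card c)"
    by (simp add: faces_def)
qed

lemma eq_one_point_extensions:
  assumes "\<And>v. v \<in> r \<Longrightarrow> card v = card c + 1"
    and "\<Union>r = \<sigma>" "\<Inter>r = c"
  shows "r = one_point_extensions c \<sigma>"
proof -
  have extension: "\<exists>y. y \<notin> c \<and> v = insert y c" if "v \<in> r" for v
  proof -
    have "c \<subseteq> v"
      using that \<open>\<Inter>r = c\<close> by blast
    moreover have "finite v"
      using assms(1)[OF that] by (simp add: card_ge_0_finite)
    ultimately have "card (v - c) = 1"
      using assms(1)[OF that] by (simp add: card_Diff_subset finite_subset)
    then obtain y where "v - c = {y}"
      by (rule card_1_singletonE)
    with \<open>c \<subseteq> v\<close> show ?thesis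
      by blast
  qed
  show ?thesis
  proof
    show "r \<subseteq> one_point_extensions c \<sigma>"
      using extension \<open>\<Union>r = \<sigma>\<close> unfolding one_point_extensions_def by blast
    show "one_point_extensions c \<sigma> \<subseteq> r"
    proof
      fix w assume "w \<in> one_point_extensions c \<sigma>"
      then obtain x where x: "x \<in> \<sigma>" "x \<notin> c" "w = insert x c"
        unfolding one_point_extensions_def by auto
      then obtain v where "v \<in> r" "x \<in> v"
        using \<open>\<Union>r = \<sigma>\<close> by blast
      with extension x show "w \<in> r"
        by (metis insert_iff)
    qed
  qed
qed

lemma rep_complex_subset_faces:
  assumes "r \<in> rep_complex X d k"
  shows "r \<subseteq> faces X k"
  using assms unfolding rep_complex_def by blast

lemma rep_complexI:
  assumes "1 \<le> i" "i \<le> d - k" "S \<subseteq> faces X k" "finite S" "card S = i + 1"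
    and "\<Union>S \<in> faces X (i + k)" "card (\<Inter>S) = k"
  shows "S \<in> rep_complex X d k"
  unfolding rep_complex_def using assms by (intro UnI2 CollectI exI[of _ i]) simp

lemma one_point_extensions_face:
  assumes "pure_complex X d" "1 \<le> i" "\<sigma> \<in> faces X (k + i)" "c \<subseteq> \<sigma>" "card c = k"
  shows "one_point_extensions c \<sigma> \<in> rep_complex X d k"
    and "\<Union>(one_point_extensions c \<sigma>) = \<sigma>" and "\<Inter>(one_point_extensions c \<sigma>) = c"
proof -
  have "\<sigma> \<in> X" "card \<sigma> = k + i + 1"
    using assms(3) by (auto simp: faces_def)
  then have "finite \<sigma>" "card \<sigma> \<le> d + 1"
    using assms(1) by (auto simp: pure_complex_def intro: card_ge_0_finite)
  have "finite c"
    using assms(4) \<open>finite \<sigma>\<close> by (rule finite_subset)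
  have card_diff: "card (\<sigma> - c) = i + 1"
    using \<open>card \<sigma> = k + i + 1\<close> \<open>finite c\<close> assms(4,5) by (simp add: card_Diff_subset)
  with assms(2) show core: "\<Inter>(one_point_extensions c \<sigma>) = c"
    by (intro Inter_one_point_extensions) simp
  from card_diff have "c \<subset> \<sigma>"
    using assms(4) by auto
  then show union: "\<Union>(one_point_extensions c \<sigma>) = \<sigma>"
    by (rule Union_one_point_extensions)
  show "one_point_extensions c \<sigma> \<in> rep_complex X d k"
  proof (rule rep_complexI[OF assms(2)])
    show "i \<le> d - k"
      using \<open>card \<sigma> = k + i + 1\<close> \<open>card \<sigma> \<le> d + 1\<close> by simp
    show "one_point_extensions c \<sigma> \<subseteq> faces X k"
      using one_point_extensions_subset_faces[OF _ \<open>\<sigma> \<in> X\<close> assms(4) \<open>finite c\<close>] assms(1,5)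
      by (simp add: pure_complex_def)
    show "finite (one_point_extensions c \<sigma>)"
      using \<open>finite \<sigma>\<close> by (simp add: one_point_extensions_def)
    show "card (one_point_extensions c \<sigma>) = i + 1"
      using card_one_point_extensions[OF \<open>finite \<sigma>\<close>] card_diff by simp
    show "\<Union>(one_point_extensions c \<sigma>) \<in> faces X (i + k)" "card (\<Inter>(one_point_extensions c \<sigma>)) = k"
      using union core assms(3,5) by (simp_all add: add.commute)
  qed
qed

lemma rep_complex_eq_one_point_extensions:
  assumes "r \<in> rep_complex X d k" "card c = k" "\<Union>r = \<sigma>" "\<Inter>r = c"
  shows "r = one_point_extensions c \<sigma>"
proof (rule eq_one_point_extensions[OF _ assms(3,4)])
  show "card v = card c + 1" if "v \<in> r" for v
    using rep_complex_subset_faces[OF assms(1)] that assms(2) by (auto simp: faces_def)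
qed

theorem mainTheorem12:
  fixes X :: "'a set set" and d k i :: nat and \<sigma> c :: "'a set"
  assumes "pure_complex X d"
    and "k \<le> d - 1" and "1 \<le> d"
    and "1 \<le> i"
    and "\<sigma> \<in> faces X (k + i)"
    and "c \<subseteq> \<sigma>" and "card c = k"
  shows "\<exists>!r. r \<in> rep_complex X d k \<and> \<Union>r = \<sigma> \<and> \<Inter>r = c"
proof (rule ex1I[of _ "one_point_extensions c \<sigma>"])
  show "one_point_extensions c \<sigma> \<in> rep_complex X d k \<and>
      \<Union>(one_point_extensions c \<sigma>) = \<sigma> \<and> \<Inter>(one_point_extensions c \<sigma>) = c"
    using one_point_extensions_face[OF assms(1,4-7)] by blast
  show "r = one_point_extensions c \<sigma>" if "r \<in> rep_complex X d k \<and> \<Union>r = \<sigma> \<and> \<Inter>r = c" for r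
    using that rep_complex_eq_one_point_extensions assms(7) by blast
qed

end
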